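(* Fix $\kappa_r>0$. For $\lambda_r\in\mathbb{R}$, let $\gamma_r$ be a random variable on $(0,\infty)$ with density proportional to $\gamma^{-1/2}\exp\!\left(-\frac{\lambda_r^2+\kappa_r\gamma^2}{2\gamma}\right)$, and let $\kappa'_r$ be a random variable on $(0,\infty)$ with density proportional to $\kappa\exp\!\left(-\frac{\mathbb{E}[\gamma_r]\,\kappa}{2}\right)$ (a Gamma distribution with shape $2$ and rate $\mathbb{E}[\gamma_r]/2$). Then there exists a decreasing function $\rho:[0,\infty)\to(0,\infty)$, depending only on $\kappa_r$, such that $\mathbb{E}[\kappa'_r] = \rho(|\lambda_r|)$ for every $\lambda_r\in\mathbb{R}$.
   Context: In the paper's Gibbs sampler, $\kappa_r$ is resampled from $\mathrm{Gamma}(\text{shape }2,\text{ rate }\gamma_r/2)$, and the theorem concerns this update with $\gamma_r$ replaced by its conditional expectation given $\lambda_r$ and the current value of $\kappa_r$. *)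

theory Defs
  imports "HOL-Analysis.Analysis"
begin

definition gig_dens :: "real \<Rightarrow> real \<Rightarrow> real \<Rightarrow> real" where
  "gig_dens kap lam g = g powr (-1/2) * exp (- (lam^2 + kap * g^2) / (2 * g))"

definition mean_gamma :: "real \<Rightarrow> real \<Rightarrow> real" where
  "mean_gamma kap lam =
     (LINT g:{0<..}|lborel. g * gig_dens kap lam g) / (LINT g:{0<..}|lborel. gig_dens kap lam g)"

definition kappa_dens :: "real \<Rightarrow> real \<Rightarrow> real" where
  "kappa_dens b k = k * exp (- (b * k) / 2)"

definition mean_kappa_new :: "real \<Rightarrow> real \<Rightarrow> real" where
  "mean_kappa_new kap lam =
     (LINT k:{0<..}|lborel. k * kappa_dens (mean_gamma kap lam) k)
       / (LINT k:{0<..}|lborel. kappa_dens (mean_gamma kap lam) k)"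

end

theory Submission
  imports Defs "HOL-Probability.Probability"
begin

text \<open>
  The Gamma mean of the new \<open>\<kappa>\<close> is
  \<open>E[\<kappa>'] = 2 \<cdot> 2 / E[\<gamma>] = 4 / E[\<gamma>]\<close>, so it suffices that \<open>E[\<gamma>]\<close> is positive and
  nondecreasing in \<open>|\<lambda>|\<close>. Raising \<open>|\<lambda>|\<close> from \<open>x\<close> to \<open>y\<close> multiplies the density of \<open>\<gamma>\<close> by
  \<open>exp (-(y\<^sup>2 - x\<^sup>2) / (2\<gamma>))\<close>, which is nondecreasing in \<open>\<gamma>\<close>; a monotone likelihood ratio
  can only increase the mean.
\<close>

lemma set_integral_pos:
  fixes f :: "'a \<Rightarrow> real"
  assumes f: "set_integrable M A f" and A: "A \<in> sets M" "emeasure M A \<noteq> 0"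
    and pos: "\<And>x. x \<in> A \<Longrightarrow> f x > 0"
  shows "(LINT x:A|M. f x) > 0"
proof -
  let ?h = "\<lambda>x. indicator A x *\<^sub>R f x"
  have int: "integrable M ?h" using f unfolding set_integrable_def .
  have nn: "AE x in M. 0 \<le> ?h x"
    using pos by (intro AE_I2) (auto split: split_indicator intro: less_imp_le)
  have "integral\<^sup>L M ?h \<noteq> 0"
  proof
    assume "integral\<^sup>L M ?h = 0"
    then have "AE x in M. ?h x = 0" using integral_nonneg_eq_0_iff_AE[OF int nn] by simp
    then have "AE x in M. x \<notin> A"
      by eventually_elim (use pos in \<open>force split: split_indicator\<close>)
    moreover have "{x \<in> space M. \<not> x \<notin> A} = A" using sets.sets_into_space[OF A(1)] by auto
    ultimately show False using A by (simp add: AE_iff_measurable[OF A(1)])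
  qed
  then show ?thesis using integral_nonneg_AE[OF nn] unfolding set_lebesgue_integral_def by simp
qed

lemma set_integral_pos_Ioi:
  fixes f :: "real \<Rightarrow> real"
  assumes "set_integrable lborel {0<..} f" and "\<And>x. x > 0 \<Longrightarrow> f x > 0"
  shows "(LINT x:{0<..}|lborel. f x) > 0"
proof (rule set_integral_pos)
  have "emeasure lborel {1..2::real} \<le> emeasure lborel ({0<..} :: real set)"
    by (rule emeasure_mono) auto
  then show "emeasure lborel ({0<..} :: real set) \<noteq> 0" by (auto simp: emeasure_lborel_Icc)
qed (use assms in auto)

lemma set_integral_mean_le_mono_ratio:
  fixes p q :: "real \<Rightarrow> real"
  assumes p_pos: "\<And>x. x > 0 \<Longrightarrow> p x > 0" and q_pos: "\<And>x. x > 0 \<Longrightarrow> q x > 0"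
    and ratio_mono: "mono_on {0<..} (\<lambda>x. q x / p x)"
    and p_int: "set_integrable lborel {0<..} p" "set_integrable lborel {0<..} (\<lambda>x. x * p x)"
    and q_int: "set_integrable lborel {0<..} q" "set_integrable lborel {0<..} (\<lambda>x. x * q x)"
  shows "(LINT x:{0<..}|lborel. x * p x) / (LINT x:{0<..}|lborel. p x)
           \<le> (LINT x:{0<..}|lborel. x * q x) / (LINT x:{0<..}|lborel. q x)"
proof -
  define Zp where "Zp = (LINT x:{0<..}|lborel. p x)"
  define Mp where "Mp = (LINT x:{0<..}|lborel. x * p x)"
  define Zq where "Zq = (LINT x:{0<..}|lborel. q x)"
  define Mq where "Mq = (LINT x:{0<..}|lborel. x * q x)"
  define m where "m = Mp / Zp"
  define r where "r = q m / p m"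
  have Zp: "Zp > 0" unfolding Zp_def by (intro set_integral_pos_Ioi p_int p_pos)
  have Zq: "Zq > 0" unfolding Zq_def by (intro set_integral_pos_Ioi q_int q_pos)
  have "Mp > 0" unfolding Mp_def using p_int p_pos by (intro set_integral_pos_Ioi) auto
  with Zp have m: "m > 0" unfolding m_def by simp
  \<comment> \<open>Chebyshev's trick: the integrand below is pointwise nonnegative and integrates to \<open>Mq - m * Zq\<close>.\<close>
  have pointwise: "0 \<le> (x - m) * (q x - r * p x)" if x: "x \<in> {0<..}" for x
  proof -
    have "(x - m) * (q x / p x - r) \<ge> 0"
      using mono_onD[OF ratio_mono, of x m] mono_onD[OF ratio_mono, of m x] x m
      unfolding r_def by (cases "x \<le> m") (auto intro: mult_nonpos_nonpos)
    then have "0 \<le> ((x - m) * (q x / p x - r)) * p x" using p_pos[of x] x by simp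
    also have "\<dots> = (x - m) * (q x - r * p x)" using p_pos[of x] x by (simp add: field_simps)
    finally show ?thesis .
  qed
  have "(LINT x:{0<..}|lborel. (x - m) * (q x - r * p x))
      = (LINT x:{0<..}|lborel. (x * q x - m * q x) - r * (x * p x - m * p x))"
    by (simp add: algebra_simps)
  also have "\<dots> = (Mq - m * Zq) - r * (Mp - m * Zp)"
    unfolding Mq_def Zq_def Mp_def Zp_def using p_int q_int
    by (simp add: set_integral_diff set_integral_mult_right set_integrable_mult_right)
  also have "Mp - m * Zp = 0" unfolding m_def using Zp by simp
  finally have "(LINT x:{0<..}|lborel. (x - m) * (q x - r * p x)) = Mq - m * Zq" by simp
  moreover have "(LINT x:{0<..}|lborel. (x - m) * (q x - r * p x)) \<ge> 0"
    unfolding set_lebesgue_integral_def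
    by (intro Bochner_Integration.integral_nonneg) (use pointwise in \<open>auto simp: indicator_def\<close>)
  ultimately have "m * Zq \<le> Mq" by simp
  then show ?thesis using Zq unfolding m_def Mp_def Zp_def Mq_def Zq_def
    by (simp add: pos_le_divide_eq)
qed

lemma set_integrable_powr_exp_Ioi:
  fixes a r :: real
  assumes a: "a > 0" and r: "r > -1"
  shows "set_integrable lborel {0<..} (\<lambda>x. x powr r * exp (-(a * x)))"
proof -
  have "(\<lambda>t. complex_of_real t powr (complex_of_real (r + 1) - 1) / of_real (exp (a * t)))
          absolutely_integrable_on {0<..}"
    by (rule absolutely_integrable_Gamma_integral) (use a r in auto)
  from absolutely_integrable_norm[OF this]
  have "set_integrable lebesgue {0<..}
          (\<lambda>t. norm (complex_of_real t powr (complex_of_real (r + 1) - 1) / of_real (exp (a * t))))"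
    by (simp add: o_def)
  also have "?this \<longleftrightarrow> set_integrable lebesgue {0<..} (\<lambda>x. x powr r * exp (-(a * x)))"
  proof (rule set_integrable_cong)
    fix x :: real assume "x \<in> {0<..}"
    moreover have "complex_of_real (r + 1) - 1 = complex_of_real r" by simp
    ultimately show "norm (complex_of_real x powr (complex_of_real (r + 1) - 1) / of_real (exp (a * x)))
                       = x powr r * exp (-(a * x))"
      by (simp add: powr_of_real norm_mult norm_inverse exp_minus divide_inverse)
  qed auto
  finally show ?thesis
    unfolding set_integrable_def by (subst (asm) integrable_completion) measurable
qed

lemma set_integral_power_exp_Ioi:
  fixes l :: real
  assumes l: "l > 0" and i: "i > 0"
  shows "(LINT x:{0<..}|lborel. x ^ i * exp (-(l * x))) = fact i / l ^ Suc i"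
proof -
  have eq: "(\<lambda>x. indicator {0<..} x *\<^sub>R (x ^ i * exp (-(l * x))))
              = (\<lambda>x. erlang_density 0 l x * x ^ i * (1 / l))"
    using l i by (auto simp: fun_eq_iff erlang_density_def split: split_indicator)
  have "(\<integral>\<^sup>+x. ennreal (erlang_density 0 l x * x ^ i * (1 / l)) \<partial>lborel)
      = (\<integral>\<^sup>+x. ennreal (erlang_density 0 l x * x ^ i) * ennreal (1 / l) \<partial>lborel)"
    using l by (intro nn_integral_cong) (subst ennreal_mult''[symmetric], simp_all)
  also have "\<dots> = (\<integral>\<^sup>+x. ennreal (erlang_density 0 l x * x ^ i) \<partial>lborel) * ennreal (1 / l)"
    by (rule nn_integral_multc) measurable
  also have "\<dots> = ennreal (fact i / l ^ Suc i)"
    using l by (simp add: nn_integral_erlang_ith_moment ennreal_mult''[symmetric] divide_ennreal)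
  finally have "has_bochner_integral lborel (\<lambda>x. erlang_density 0 l x * x ^ i * (1 / l))
                  (fact i / l ^ Suc i)"
    by (intro has_bochner_integral_nn_integral) (use l in \<open>auto simp: erlang_density_def\<close>)
  then show ?thesis
    unfolding set_lebesgue_integral_def eq by (rule has_bochner_integral_integral_eq)
qed

lemma gig_dens_pos: "g > 0 \<Longrightarrow> gig_dens kap lam g > 0"
  unfolding gig_dens_def by simp

lemma gig_dens_abs: "gig_dens kap \<bar>lam\<bar> = gig_dens kap lam"
  by (simp add: fun_eq_iff gig_dens_def)

lemma gig_dens_eq:
  assumes "g > 0"
  shows "gig_dens kap lam g = exp (-(lam\<^sup>2 / (2 * g))) * (g powr (-1/2) * exp (-((kap / 2) * g)))"
proof -
  have "- (lam\<^sup>2 + kap * g\<^sup>2) / (2 * g) = -(lam\<^sup>2 / (2 * g)) + -((kap / 2) * g)"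
    using assms by (simp add: field_simps power2_eq_square)
  then show ?thesis unfolding gig_dens_def by (simp only: exp_add mult_ac)
qed

lemma gig_dens_ratio:
  assumes "g > 0"
  shows "gig_dens kap y g / gig_dens kap x g = exp (-((y\<^sup>2 - x\<^sup>2) / 2) / g)"
proof -
  have "-(y\<^sup>2 / (2 * g)) = -((y\<^sup>2 - x\<^sup>2) / 2) / g + -(x\<^sup>2 / (2 * g))"
    using assms by (simp add: field_simps)
  then have "exp (-(y\<^sup>2 / (2 * g))) = exp (-((y\<^sup>2 - x\<^sup>2) / 2) / g) * exp (-(x\<^sup>2 / (2 * g)))"
    by (simp only: exp_add)
  then show ?thesis using assms gig_dens_eq[OF assms, of kap y] gig_dens_eq[OF assms, of kap x]
    by simp
qed

text \<open>The factor \<open>exp (-\<lambda>\<^sup>2/(2g)) \<le> 1\<close> reduces integrability to that of a Gamma kernel.\<close>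

lemma set_integrable_gig_dens:
  assumes kap: "kap > 0" and r: "r > -1/2"
  shows "set_integrable lborel {0<..} (\<lambda>g. g powr r * gig_dens kap lam g)"
proof (rule set_integrable_bound)
  show "set_integrable lborel {0<..} (\<lambda>g. g powr (r - 1/2) * exp (-((kap / 2) * g)))"
    using kap r by (intro set_integrable_powr_exp_Ioi) auto
  show "set_borel_measurable lborel {0<..} (\<lambda>g. g powr r * gig_dens kap lam g)"
    unfolding set_borel_measurable_def gig_dens_def by measurable
  show "AE g\<in>{0<..} in lborel.
          norm (g powr r * gig_dens kap lam g) \<le> norm (g powr (r - 1/2) * exp (-((kap / 2) * g)))"
  proof (intro AE_I2 impI)
    fix g :: real assume "g \<in> {0<..}"
    then have g: "g > 0" by simp
    then have "g powr r * gig_dens kap lam g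
                 = exp (-(lam\<^sup>2 / (2 * g))) * (g powr (r - 1/2) * exp (-((kap / 2) * g)))"
      by (simp add: gig_dens_eq powr_add[symmetric] mult_ac)
    then show "norm (g powr r * gig_dens kap lam g) \<le> norm (g powr (r - 1/2) * exp (-((kap / 2) * g)))"
      using g by (simp add: mult_left_le_one_le)
  qed
qed

lemma set_integrable_gig_dens_0:
  "kap > 0 \<Longrightarrow> set_integrable lborel {0<..} (gig_dens kap lam)"
  by (rule set_integrable_cong[THEN iffD1, OF refl refl _ set_integrable_gig_dens[of kap 0]]) simp_all

lemma set_integrable_gig_dens_1:
  "kap > 0 \<Longrightarrow> set_integrable lborel {0<..} (\<lambda>g. g * gig_dens kap lam g)"
  by (rule set_integrable_cong[THEN iffD1, OF refl refl _ set_integrable_gig_dens[of kap 1]]) simp_all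

lemma mean_gamma_pos:
  assumes "kap > 0"
  shows "mean_gamma kap lam > 0"
  unfolding mean_gamma_def using assms
  by (intro divide_pos_pos set_integral_pos_Ioi set_integrable_gig_dens_0 set_integrable_gig_dens_1)
     (simp_all add: gig_dens_pos)

lemma mean_gamma_abs: "mean_gamma kap \<bar>lam\<bar> = mean_gamma kap lam"
  by (simp add: mean_gamma_def gig_dens_abs)

lemma mean_gamma_mono:
  assumes kap: "kap > 0" and "0 \<le> x" "x \<le> y"
  shows "mean_gamma kap x \<le> mean_gamma kap y"
  unfolding mean_gamma_def
proof (rule set_integral_mean_le_mono_ratio)
  have "x\<^sup>2 \<le> y\<^sup>2" using assms by (intro power_mono) auto
  then have c: "(y\<^sup>2 - x\<^sup>2) / 2 \<ge> 0" by simp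
  show "mono_on {0<..} (\<lambda>g. gig_dens kap y g / gig_dens kap x g)"
    by (rule mono_onI) (use c in \<open>auto simp: gig_dens_ratio intro: divide_left_mono\<close>)
qed (use kap in \<open>auto intro: gig_dens_pos set_integrable_gig_dens_0 set_integrable_gig_dens_1\<close>)

lemma mean_kappa_new_eq:
  assumes "kap > 0"
  shows "mean_kappa_new kap lam = 4 / mean_gamma kap lam"
proof -
  define l where "l = mean_gamma kap lam / 2"
  have l: "l > 0" unfolding l_def using mean_gamma_pos[OF assms] by simp
  have "(\<lambda>k. k * kappa_dens (mean_gamma kap lam) k) = (\<lambda>k. k ^ 2 * exp (-(l * k)))"
       "kappa_dens (mean_gamma kap lam) = (\<lambda>k. k ^ 1 * exp (-(l * k)))"
    by (auto simp: fun_eq_iff kappa_dens_def l_def power2_eq_square mult_ac)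
  moreover have "(LINT k:{0<..}|lborel. k ^ 2 * exp (-(l * k))) = fact 2 / l ^ 3"
                "(LINT k:{0<..}|lborel. k ^ 1 * exp (-(l * k))) = fact 1 / l ^ 2"
    using set_integral_power_exp_Ioi[OF l, of 2] set_integral_power_exp_Ioi[OF l, of 1]
    by (simp_all add: numeral_3_eq_3 numeral_2_eq_2)
  ultimately have "mean_kappa_new kap lam = (fact 2 / l ^ 3) / (fact 1 / l ^ 2)"
    unfolding mean_kappa_new_def by (simp only:)
  also have "\<dots> = 4 / mean_gamma kap lam"
    using l by (simp add: l_def field_simps power_numeral_reduce)
  finally show ?thesis .
qed

theorem theorem3:
  fixes kap :: real
  assumes "kap > 0"
  shows "\<exists>\<rho> :: real \<Rightarrow> real.
           (\<forall>x y. 0 \<le> x \<longrightarrow> x \<le> y \<longrightarrow> \<rho> y \<le> \<rho> x) \<and>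
           (\<forall>x\<ge>0. \<rho> x > 0) \<and>
           (\<forall>lam :: real. mean_kappa_new kap lam = \<rho> \<bar>lam\<bar>)"
proof (intro exI[of _ "\<lambda>x. 4 / mean_gamma kap x"] conjI allI impI)
  fix x y :: real
  assume "0 \<le> x" "x \<le> y"
  then show "4 / mean_gamma kap y \<le> 4 / mean_gamma kap x"
    using assms by (intro divide_left_mono mean_gamma_mono) (auto intro: mult_pos_pos mean_gamma_pos)
next
  show "4 / mean_gamma kap x > 0" for x
    using mean_gamma_pos[OF assms] by simp
next
  show "mean_kappa_new kap lam = 4 / mean_gamma kap \<bar>lam\<bar>" for lam
    by (simp add: mean_kappa_new_eq[OF assms] mean_gamma_abs)
qed

end
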